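(* Let $\mathcal{D}$ be an isotropic distribution on $\mathbb{R}^{d}$ with $\mathbb{P}_{\omega\sim\mathcal{D}}(\omega=0)=0$, let $\mathbf{z}\in\mathbb{R}^d$, and let $f:\mathbb{R}\to\mathbb{R}$ belong to class F1. Let $\widehat{F}^{\mathrm{iid}}_{f,\mathcal{D}}(\mathbf{z})$ and $\widehat{F}^{\mathrm{ort}}_{f,\mathcal{D}}(\mathbf{z})$ be the i.i.d. and the (block-)orthogonal Monte Carlo estimators of $F_{f,\mathcal{D}}(\mathbf{z})=\mathbb{E}_{\omega\sim\mathcal{D}}[f(\omega^{\top}\mathbf{z})]$ with $s$ samples. Then for every $\lambda\in\mathbb{R}$ such that $\mathbb{E}_{\omega\sim\mathcal{D}}[e^{\lambda f(\omega^\top\mathbf{z})/s}]<\infty$, $$\mathbb{E}\big[e^{\lambda\widehat{F}^{\mathrm{ort}}_{f,\mathcal{D}}(\mathbf{z})}\big]\le\mathbb{E}\big[e^{\lambda\widehat{F}^{\mathrm{iid}}_{f,\mathcal{D}}(\mathbf{z})}\big].$$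
   Context: Isotropic: $Q\omega\overset{d}{=}\omega$ for $\omega\sim\mathcal{D}$ and every orthogonal $Q$. An orthogonal ensemble for $\mathcal{D}$ of size $m\le d$ is $l_iv_i$ ($i=1,\dots,m$), with $v_1,\dots,v_d$ the rows of a Haar-random orthogonal $d\times d$ matrix and $l_i$ i.i.d. copies of $\|\omega\|_2$ ($\omega\sim\mathcal{D}$) independent of the $v_i$. For general $s$, the (block-)orthogonal ensemble $\omega^{\mathrm{ort}}_1,\dots,\omega^{\mathrm{ort}}_s$ is obtained by partitioning the indices $1,\dots,s$ into consecutive blocks of size at most $d$, each block being an orthogonal ensemble, with different blocks independent. The i.i.d. ensemble $\omega^{\mathrm{iid}}_1,\dots,\omega^{\mathrm{iid}}_s$ consists of independent samples from $\mathcal{D}$. Estimators: $\widehat{F}^{\mathrm{iid}}_{f,\mathcal{D}}(\mathbf{z})=\frac1s\sum_{i=1}^s f((\omega^{\mathrm{iid}}_i)^\top\mathbf{z})$ and $\widehat{F}^{\mathrm{ort}}_{f,\mathcal{D}}(\mathbf{z})=\frac1s\sum_{i=1}^s f((\omega^{\mathrm{ort}}_i)^\top\mathbf{z})$. Class F1: $f(u)=g(|u|)$ with $g:[0,\infty)\to\mathbb{R}$ monotone (non-decreasing or non-increasing). *)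

theory Defs
  imports "HOL-Probability.Probability"
begin

definition isotropic :: "(real^'n) measure \<Rightarrow> bool" where
  "isotropic D \<longleftrightarrow>
     (\<forall>Q::real^'n^'n. orthogonal_matrix Q \<longrightarrow> distr D borel (\<lambda>w. Q *v w) = D)"

text \<open>H is the Haar (uniform) probability measure on the orthogonal group O(d):
  a probability measure concentrated on orthogonal matrices and invariant under
  left multiplication by orthogonal matrices (this characterises it uniquely).\<close>
definition haar_orthogonal :: "(real^'n^'n) measure \<Rightarrow> bool" where
  "haar_orthogonal H \<longleftrightarrow>
     prob_space H \<and> sets H = sets borel \<and> (AE M in H. orthogonal_matrix M) \<and>
     (\<forall>Q::real^'n^'n. orthogonal_matrix Q \<longrightarrow> distr H borel (\<lambda>M. Q ** M) = H)"

definition iid_ensemble :: "(real^'n) measure \<Rightarrow> nat \<Rightarrow> (nat \<Rightarrow> real^'n) measure" where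
  "iid_ensemble D s = PiM {..<s} (\<lambda>_. D)"

definition iid_estimator :: "(real \<Rightarrow> real) \<Rightarrow> nat \<Rightarrow> real^'n \<Rightarrow> (nat \<Rightarrow> real^'n) \<Rightarrow> real" where
  "iid_estimator f s z w = (1 / real s) * (\<Sum>i<s. f (w i \<bullet> z))"

text \<open>Block-orthogonal ensemble: the list bs gives the sizes of the consecutive blocks.
  Block b uses an independent Haar matrix M b and independent lengths l (b,j) distributed
  as the norm of a sample of D; its j-th sample is l (b,j) *R (row e j of M b),
  where e enumerates the row indices.\<close>
definition ort_ensemble :: "(real^'n) measure \<Rightarrow> (real^'n^'n) measure \<Rightarrow> nat list
    \<Rightarrow> ((nat \<Rightarrow> real^'n^'n) \<times> (nat \<times> nat \<Rightarrow> real)) measure" where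
  "ort_ensemble D H bs =
     PiM {..<length bs} (\<lambda>_. H) \<Otimes>\<^sub>M
     PiM (SIGMA b:{..<length bs}. {..<bs ! b}) (\<lambda>_. distr D borel norm)"

definition ort_estimator :: "(real \<Rightarrow> real) \<Rightarrow> (nat \<Rightarrow> 'n) \<Rightarrow> nat list \<Rightarrow> real^'n
    \<Rightarrow> (nat \<Rightarrow> real^'n^'n) \<times> (nat \<times> nat \<Rightarrow> real) \<Rightarrow> real" where
  "ort_estimator f e bs z x =
     (1 / real (sum_list bs)) *
     (\<Sum>b<length bs. \<Sum>j<bs ! b. f ((snd x (b, j) *\<^sub>R (fst x b $ e j)) \<bullet> z))"

end

theory Submission
  imports Defs
begin

text \<open>
  Integrating out the independent lengths turns the orthogonal moment generating function into a
  product over blocks of Haar integrals of \<open>\<Prod>\<^sub>j \<phi>((M z)\<^bsub>e j\<^esub>)\<close>, where \<open>\<phi>(c) = E exp(\<lambda> f(|\<omega>| c)/s)\<close>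
  is monotone in \<open>|c|\<close>, while the i.i.d. one is the \<open>s\<close>-th power of \<open>E exp(\<lambda> f(\<omega>\<^sup>T z)/s)\<close>.
  The coordinates of \<open>M z\<close> for Haar-distributed \<open>M\<close> are negatively dependent for such
  functions, so each block integral is at most the product of its one-coordinate marginals, and by
  isotropy \<open>|\<omega>| (M z)\<^sub>k\<close> has the law of \<open>\<omega>\<^sup>T z\<close>, which makes every marginal equal to the i.i.d.
  factor. Negative dependence is proved one coordinate at a time: conditioned on \<open>(M z)\<^sub>m\<close>, the
  vector \<open>M z\<close> is spread uniformly by the stabiliser of \<open>e\<^sub>m\<close> over a sphere of radius
  \<open>\<surd>(|z|\<^sup>2 - (M z)\<^sub>m\<^sup>2)\<close>, so the conditional expectation of the other factors is ordered
  oppositely to \<open>\<phi>(|(M z)\<^sub>m|)\<close>, and Chebyshev's integral inequality splits off that factor.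
\<close>

lemma continuous_on_matrix_vector_mult [continuous_intros]:
  fixes f :: "'a::topological_space \<Rightarrow> real^'m^'n" and g :: "'a \<Rightarrow> real^'m"
  assumes "continuous_on S f" "continuous_on S g"
  shows "continuous_on S (\<lambda>x. f x *v g x)"
  unfolding matrix_vector_mult_def by (intro continuous_intros assms)

lemma continuous_on_matrix_matrix_mult [continuous_intros]:
  fixes f :: "'a::topological_space \<Rightarrow> real^'m^'n" and g :: "'a \<Rightarrow> real^'k^'m"
  assumes "continuous_on S f" "continuous_on S g"
  shows "continuous_on S (\<lambda>x. f x ** g x)"
  unfolding matrix_matrix_mult_def by (intro continuous_intros assms)

lemma borel_measurable_matrix_vector_mult [measurable (raw)]:
  fixes f :: "'a \<Rightarrow> real^'m^'n" and g :: "'a \<Rightarrow> real^'m"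
  assumes "f \<in> borel_measurable M" "g \<in> borel_measurable M"
  shows "(\<lambda>x. f x *v g x) \<in> borel_measurable M"
proof -
  have "(\<lambda>p::(real^'m^'n) \<times> (real^'m). fst p *v snd p) \<in> borel_measurable borel"
    by (intro borel_measurable_continuous_onI continuous_intros)
  from measurable_compose[OF measurable_Pair[OF assms] this[unfolded borel_prod[symmetric]]]
  show ?thesis by simp
qed

lemma borel_measurable_matrix_matrix_mult [measurable (raw)]:
  fixes f :: "'a \<Rightarrow> real^'m^'n" and g :: "'a \<Rightarrow> real^'k^'m"
  assumes "f \<in> borel_measurable M" "g \<in> borel_measurable M"
  shows "(\<lambda>x. f x ** g x) \<in> borel_measurable M"
proof -
  have "(\<lambda>p::(real^'m^'n) \<times> (real^'k^'m). fst p ** snd p) \<in> borel_measurable borel"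
    by (intro borel_measurable_continuous_onI continuous_intros)
  from measurable_compose[OF measurable_Pair[OF assms] this[unfolded borel_prod[symmetric]]]
  show ?thesis by simp
qed

lemma borel_measurable_vec_nth [measurable (raw)]:
  fixes f :: "'a \<Rightarrow> 'b::real_normed_vector^'n"
  assumes "f \<in> borel_measurable M"
  shows "(\<lambda>x. f x $ i) \<in> borel_measurable M"
proof -
  have "(\<lambda>v::'b^'n. v $ i) \<in> borel_measurable borel"
    by (intro borel_measurable_continuous_onI continuous_intros continuous_on_id)
  from measurable_compose[OF assms this] show ?thesis .
qed

lemma borel_measurable_transpose [measurable (raw)]:
  fixes f :: "'a \<Rightarrow> real^'m^'n"
  assumes "f \<in> borel_measurable M"
  shows "(\<lambda>x. transpose (f x)) \<in> borel_measurable M"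
proof -
  have "(transpose :: real^'m^'n \<Rightarrow> _) \<in> borel_measurable borel"
    unfolding transpose_def by (intro borel_measurable_continuous_onI continuous_intros)
  from measurable_compose[OF assms this] show ?thesis .
qed

lemma orthogonal_transformation_matrix_vector_mult:
  "orthogonal_matrix (N::real^'n^'n) \<Longrightarrow> orthogonal_transformation ((*v) N)"
  by (simp add: orthogonal_transformation_matrix)

lemma inner_transpose_matrix_vector_mult:
  fixes A :: "real^'n^'m"
  shows "(transpose A *v x) \<bullet> y = x \<bullet> (A *v y)"
  by (simp add: dot_lmul_matrix)

lemma orthogonal_transformation_matrixD:
  fixes f :: "real^'n \<Rightarrow> real^'n"
  assumes "orthogonal_transformation f"
  shows "orthogonal_matrix (matrix f)" and "matrix f *v x = f x"
  using assms by (auto simp: orthogonal_transformation_matrix orthogonal_transformation_linear)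

section \<open>Householder reflections and the stabiliser of a coordinate axis\<close>

definition householder :: "'a::real_inner \<Rightarrow> 'a \<Rightarrow> 'a" where
  "householder w x = (if w = 0 then x else x - (2 * (w \<bullet> x) / (w \<bullet> w)) *\<^sub>R w)"

lemma linear_householder: "linear (householder w)"
  unfolding householder_def
  by (cases "w = 0") (auto intro!: linearI simp: algebra_simps add_divide_distrib)

lemma inner_householder: "householder w x \<bullet> householder w y = x \<bullet> y"
proof (cases "w = 0")
  case False
  then have "w \<bullet> w \<noteq> 0" by simp
  with False show ?thesis unfolding householder_def
    by (simp add: inner_diff_left inner_diff_right inner_commute field_simps)
qed (simp add: householder_def)

lemma orthogonal_transformation_householder: "orthogonal_transformation (householder w)"
  unfolding orthogonal_transformation_def using linear_householder inner_householder by blast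

lemma householder_orthogonal: "w \<bullet> x = 0 \<Longrightarrow> householder w x = x"
  by (simp add: householder_def)

lemma householder_swap:
  assumes "norm a = norm b"
  shows "householder (a - b) a = b"
proof (cases "a = b")
  case False
  have "a \<bullet> a = b \<bullet> b" using assms by (simp add: dot_square_norm)
  then have "(a - b) \<bullet> (a - b) = 2 * ((a - b) \<bullet> a)"
    by (simp add: inner_diff_left inner_diff_right inner_commute)
  moreover have "(a - b) \<bullet> (a - b) \<noteq> 0" using False by simp
  ultimately have ratio: "2 * ((a - b) \<bullet> a) / ((a - b) \<bullet> (a - b)) = 1"
    by (metis divide_self)
  have "householder (a - b) a = a - (2 * ((a - b) \<bullet> a) / ((a - b) \<bullet> (a - b))) *\<^sub>R (a - b)"
    using False by (simp add: householder_def)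
  then show ?thesis unfolding ratio by simp
qed (simp add: householder_def)

lemma borel_measurable_householder [measurable (raw)]:
  fixes w x :: "'a \<Rightarrow> 'b::euclidean_space"
  assumes [measurable]: "w \<in> borel_measurable M" "x \<in> borel_measurable M"
  shows "(\<lambda>y. householder (w y) (x y)) \<in> borel_measurable M"
  unfolding householder_def by measurable

text \<open>For orthogonal \<open>N\<close> the reflection moves \<open>N e\<^sub>m\<close> back to \<open>e\<^sub>m\<close>, so
  \<open>axis_stabilizer m N\<close> is an orthogonal map fixing \<open>e\<^sub>m\<close>; for Haar-distributed \<open>N\<close>
  it is a uniformly random element of the stabiliser of \<open>e\<^sub>m\<close>.\<close>

definition axis_stabilizer :: "'n::finite \<Rightarrow> real^'n^'n \<Rightarrow> real^'n \<Rightarrow> real^'n" where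
  "axis_stabilizer m N x = householder (N *v axis m 1 - axis m 1) (N *v x)"

lemma orthogonal_transformation_axis_stabilizer:
  assumes "orthogonal_matrix N"
  shows "orthogonal_transformation (axis_stabilizer m N)"
proof -
  have "axis_stabilizer m N = householder (N *v axis m 1 - axis m 1) \<circ> (*v) N"
    by (auto simp: axis_stabilizer_def)
  then show ?thesis
    using orthogonal_transformation_compose[OF orthogonal_transformation_householder
        orthogonal_transformation_matrix_vector_mult[OF assms]] by simp
qed

lemma axis_stabilizer_axis:
  assumes "orthogonal_matrix N"
  shows "axis_stabilizer m N (axis m 1) = axis m 1"
  unfolding axis_stabilizer_def
  by (rule householder_swap)
    (simp add: orthogonal_transformation_norm[OF orthogonal_transformation_matrix_vector_mult[OF assms]])

lemma axis_stabilizer_nth: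
  assumes "orthogonal_matrix N"
  shows "axis_stabilizer m N x $ m = x $ m"
proof -
  have "axis_stabilizer m N x $ m = axis_stabilizer m N x \<bullet> axis_stabilizer m N (axis m 1)"
    by (simp add: axis_stabilizer_axis[OF assms] cart_eq_inner_axis)
  also have "\<dots> = x \<bullet> axis m 1"
    using orthogonal_transformation_axis_stabilizer[OF assms]
    by (simp add: orthogonal_transformation_def)
  finally show ?thesis by (simp add: cart_eq_inner_axis)
qed

lemma axis_stabilizer_matrix_mult:
  "Q *v axis m 1 = axis m 1 \<Longrightarrow> axis_stabilizer m (N ** Q) x = axis_stabilizer m N (Q *v x)"
  by (simp add: axis_stabilizer_def matrix_vector_mul_assoc[symmetric])

lemma borel_measurable_axis_stabilizer [measurable (raw)]:
  fixes N :: "'a \<Rightarrow> real^'n::finite^'n" and x :: "'a \<Rightarrow> real^'n"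
  assumes [measurable]: "N \<in> borel_measurable M" "x \<in> borel_measurable M"
  shows "(\<lambda>y. axis_stabilizer m (N y) (x y)) \<in> borel_measurable M"
  unfolding axis_stabilizer_def by measurable

section \<open>Monotone functions and Chebyshev's integral inequality\<close>

lemma ennreal_rearrangement:
  fixes p q r s :: ennreal
  assumes "p \<le> q \<and> s \<le> r \<or> q \<le> p \<and> r \<le> s"
  shows "p * r + q * s \<le> p * s + q * r"
proof -
  have *: "p * r + q * s \<le> p * s + q * r" if pq: "p \<le> q" and sr: "s \<le> r" for p q r s :: ennreal
  proof -
    obtain d e where "q = p + d" "r = s + e"
      using pq sr by (auto simp: le_iff_add)
    then show ?thesis by (simp add: algebra_simps)
  qed
  from assms show ?thesis
    using *[of p q s r] *[of q p r s] by (auto simp: add.commute)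
qed

lemma rearrangement_mono_on_antimono_on:
  fixes \<phi> \<psi> :: "real \<Rightarrow> ennreal"
  assumes "mono_on {0..} \<phi> \<and> antimono_on {0..} \<psi> \<or> antimono_on {0..} \<phi> \<and> mono_on {0..} \<psi>"
    and "0 \<le> s" "0 \<le> t"
  shows "\<phi> s * \<psi> s + \<phi> t * \<psi> t \<le> \<phi> s * \<psi> t + \<phi> t * \<psi> s"
proof -
  have *: "\<phi> s * \<psi> s + \<phi> t * \<psi> t \<le> \<phi> s * \<psi> t + \<phi> t * \<psi> s" if st: "0 \<le> s" "s \<le> t" for s t
    using assms(1)
  proof (elim disjE conjE)
    assume \<phi>: "mono_on {0..} \<phi>" and \<psi>: "antimono_on {0..} \<psi>"
    show ?thesis
      using monotone_onD[OF \<phi>, of s t] monotone_onD[OF \<psi>, of s t] st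
      by (intro ennreal_rearrangement) simp
  next
    assume \<phi>: "antimono_on {0..} \<phi>" and \<psi>: "mono_on {0..} \<psi>"
    show ?thesis
      using monotone_onD[OF \<phi>, of s t] monotone_onD[OF \<psi>, of s t] st
      by (intro ennreal_rearrangement) simp
  qed
  show ?thesis
  proof (cases "s \<le> t")
    case False
    then show ?thesis using *[of t s] assms(3) by (simp add: add.commute)
  qed (use *[of s t] assms(2) in simp)
qed

lemma (in prob_space) nn_integral_mult_le_oppositely_ordered:
  fixes a b :: "'a \<Rightarrow> ennreal"
  assumes [measurable]: "a \<in> borel_measurable M" "b \<in> borel_measurable M"
    and opposite: "\<And>x y. x \<in> space M \<Longrightarrow> y \<in> space M \<Longrightarrow> a x * b x + a y * b y \<le> a x * b y + a y * b x"
  shows "(\<integral>\<^sup>+ x. a x * b x \<partial>M) \<le> (\<integral>\<^sup>+ x. a x \<partial>M) * (\<integral>\<^sup>+ x. b x \<partial>M)"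
proof -
  define I where "I = (\<integral>\<^sup>+ x. a x * b x \<partial>M)"
  have "2 * I = (\<integral>\<^sup>+ y. \<integral>\<^sup>+ x. a x * b x + a y * b y \<partial>M \<partial>M)"
    by (simp add: nn_integral_add emeasure_space_1 I_def mult_2)
  also have "\<dots> \<le> (\<integral>\<^sup>+ y. \<integral>\<^sup>+ x. a x * b y + a y * b x \<partial>M \<partial>M)"
    by (intro nn_integral_mono opposite)
  also have "\<dots> = 2 * ((\<integral>\<^sup>+ x. a x \<partial>M) * (\<integral>\<^sup>+ x. b x \<partial>M))"
    by (simp add: nn_integral_add nn_integral_multc nn_integral_cmult mult_2 mult.commute)
  finally show ?thesis
    unfolding I_def using ennreal_mult_le_mult_iff[of 2] by simp
qed

lemma nn_integral_scaled_mono_or_antimono: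
  fixes E :: "real \<Rightarrow> ennreal" and h :: "'a \<Rightarrow> real"
  assumes E_mono: "mono_on {0..} E \<or> antimono_on {0..} E" and h: "\<And>x. 0 \<le> h x"
  shows "mono_on {0..} (\<lambda>c. \<integral>\<^sup>+ x. E (h x * c) \<partial>M) \<or> antimono_on {0..} (\<lambda>c. \<integral>\<^sup>+ x. E (h x * c) \<partial>M)"
proof -
  have scale: "h x * s \<in> {0..}" "h x * t \<in> {0..}" "h x * s \<le> h x * t"
    if "0 \<le> s" "s \<le> t" for x s t
    using that h[of x] by (auto intro: mult_left_mono)
  show ?thesis
    using E_mono
  proof (elim disjE)
    assume "mono_on {0..} E"
    then have "mono_on {0..} (\<lambda>c. \<integral>\<^sup>+ x. E (h x * c) \<partial>M)"
      by (intro monotone_onI nn_integral_mono) (auto elim!: monotone_onD dest: scale)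
    then show ?thesis by (rule disjI1)
  next
    assume "antimono_on {0..} E"
    then have "antimono_on {0..} (\<lambda>c. \<integral>\<^sup>+ x. E (h x * c) \<partial>M)"
      by (intro monotone_onI nn_integral_mono) (auto elim!: monotone_onD dest: scale)
    then show ?thesis by (rule disjI2)
  qed
qed

lemma nn_integral_prod_abs_scaled_mono:
  fixes \<phi> :: "real \<Rightarrow> ennreal" and c :: "'a \<Rightarrow> 'b \<Rightarrow> real"
  assumes "0 \<le> r" "r \<le> r'"
  shows "mono_on {0..} \<phi> \<Longrightarrow> (\<integral>\<^sup>+ x. (\<Prod>k\<in>S. \<phi> \<bar>r * c x k\<bar>) \<partial>M) \<le> (\<integral>\<^sup>+ x. (\<Prod>k\<in>S. \<phi> \<bar>r' * c x k\<bar>) \<partial>M)"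
    and "antimono_on {0..} \<phi> \<Longrightarrow> (\<integral>\<^sup>+ x. (\<Prod>k\<in>S. \<phi> \<bar>r' * c x k\<bar>) \<partial>M) \<le> (\<integral>\<^sup>+ x. (\<Prod>k\<in>S. \<phi> \<bar>r * c x k\<bar>) \<partial>M)"
proof -
  have scale: "\<bar>r * t\<bar> \<in> {0..}" "\<bar>r * t\<bar> \<le> \<bar>r' * t\<bar>" for t
    using assms by (auto simp: abs_mult mult_right_mono)
  show "(\<integral>\<^sup>+ x. (\<Prod>k\<in>S. \<phi> \<bar>r * c x k\<bar>) \<partial>M) \<le> (\<integral>\<^sup>+ x. (\<Prod>k\<in>S. \<phi> \<bar>r' * c x k\<bar>) \<partial>M)"
    if "mono_on {0..} \<phi>"
    using scale by (intro nn_integral_mono prod_mono_ennreal monotone_onD[OF that]) auto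
  show "(\<integral>\<^sup>+ x. (\<Prod>k\<in>S. \<phi> \<bar>r' * c x k\<bar>) \<partial>M) \<le> (\<integral>\<^sup>+ x. (\<Prod>k\<in>S. \<phi> \<bar>r * c x k\<bar>) \<partial>M)"
    if "antimono_on {0..} \<phi>"
    using scale by (intro nn_integral_mono prod_mono_ennreal monotone_onD[OF that]) auto
qed

lemma nn_integral_prod_sqrt_opposite_mono:
  fixes \<phi> :: "real \<Rightarrow> ennreal" and c :: "'a \<Rightarrow> 'b \<Rightarrow> real"
    and M :: "'a measure" and S :: "'b set" and R :: real
  assumes \<phi>_mono: "mono_on {0..} \<phi> \<or> antimono_on {0..} \<phi>"
  defines "\<beta> \<equiv> \<lambda>t. \<integral>\<^sup>+ x. (\<Prod>k\<in>S. \<phi> \<bar>sqrt (max 0 (R - t\<^sup>2)) * c x k\<bar>) \<partial>M"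
  shows "mono_on {0..} \<phi> \<and> antimono_on {0..} \<beta> \<or> antimono_on {0..} \<phi> \<and> mono_on {0..} \<beta>"
proof -
  have shrink: "0 \<le> sqrt (max 0 (R - t\<^sup>2))" "sqrt (max 0 (R - t\<^sup>2)) \<le> sqrt (max 0 (R - s\<^sup>2))"
    if "0 \<le> s" "s \<le> t" for s t :: real
  proof -
    have "s\<^sup>2 \<le> t\<^sup>2"
      using that by (intro power_mono) auto
    then have "max 0 (R - t\<^sup>2) \<le> max 0 (R - s\<^sup>2)"
      by simp
    then show "0 \<le> sqrt (max 0 (R - t\<^sup>2))" "sqrt (max 0 (R - t\<^sup>2)) \<le> sqrt (max 0 (R - s\<^sup>2))"
      by simp_all
  qed
  show ?thesis
    using \<phi>_mono
  proof (elim disjE)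
    assume \<phi>: "mono_on {0..} \<phi>"
    have "\<beta> t \<le> \<beta> s" if "s \<in> {0..}" "t \<in> {0..}" "s \<le> t" for s t
      unfolding \<beta>_def using shrink[of s t] that by (intro nn_integral_prod_abs_scaled_mono(1)[OF _ _ \<phi>]) auto
    then have "antimono_on {0..} \<beta>"
      by (intro monotone_onI)
    with \<phi> show ?thesis by blast
  next
    assume \<phi>: "antimono_on {0..} \<phi>"
    have "\<beta> s \<le> \<beta> t" if "s \<in> {0..}" "t \<in> {0..}" "s \<le> t" for s t
      unfolding \<beta>_def using shrink[of s t] that by (intro nn_integral_prod_abs_scaled_mono(2)[OF _ _ \<phi>]) auto
    then have "mono_on {0..} \<beta>"
      by (intro monotone_onI)
    with \<phi> show ?thesis by blast
  qed
qed

section \<open>Moment generating functions of the two estimators\<close>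

definition class_F1 :: "(real \<Rightarrow> real) \<Rightarrow> bool" where
  "class_F1 f \<longleftrightarrow> (\<exists>g. (\<forall>u. f u = g \<bar>u\<bar>) \<and> (mono_on {0..} g \<or> antimono_on {0..} g))"

lemma borel_measurable_class_F1:
  assumes "class_F1 f"
  shows "f \<in> borel_measurable borel"
proof -
  obtain g where f: "f = (\<lambda>u. g \<bar>u\<bar>)" and g: "mono_on {0..} g \<or> antimono_on {0..} g"
    using assms unfolding class_F1_def by auto
  have "g \<in> borel_measurable (restrict_space borel {0..})"
    using g
  proof
    assume "antimono_on {0..} g"
    then have "mono_on {0..} (\<lambda>t. - g t)"
      by (auto intro!: monotone_onI dest: monotone_onD)
    from borel_measurable_mono_on_fnc[OF this] show ?thesis by simp
  qed (rule borel_measurable_mono_on_fnc)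
  moreover have "abs \<in> borel \<rightarrow>\<^sub>M restrict_space borel {0::real..}"
    by (rule measurable_restrict_space2) auto
  ultimately show ?thesis
    unfolding f using measurable_compose by blast
qed

lemma class_F1_exp_mult:
  assumes "class_F1 f"
  shows "(\<lambda>t. ennreal (exp (c * f t))) \<in> borel_measurable borel"
    and "ennreal (exp (c * f \<bar>t\<bar>)) = ennreal (exp (c * f t))"
    and "mono_on {0..} (\<lambda>t. ennreal (exp (c * f t))) \<or> antimono_on {0..} (\<lambda>t. ennreal (exp (c * f t)))"
proof -
  obtain g where f: "\<And>u. f u = g \<bar>u\<bar>" and g: "mono_on {0..} g \<or> antimono_on {0..} g"
    using assms unfolding class_F1_def by auto
  show "(\<lambda>t. ennreal (exp (c * f t))) \<in> borel_measurable borel"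
    using borel_measurable_class_F1[OF assms] by measurable
  show "ennreal (exp (c * f \<bar>t\<bar>)) = ennreal (exp (c * f t))"
    by (simp add: f)
  have "c * g s \<le> c * g t" if "mono_on {0..} g \<and> 0 \<le> c \<or> antimono_on {0..} g \<and> c \<le> 0" "0 \<le> s" "s \<le> t" for s t
    using that monotone_onD[of "{0..}" "(\<le>)" "(\<le>)" g s t] monotone_onD[of "{0..}" "(\<le>)" "\<lambda>x y. y \<le> x" g s t]
    by (auto intro: mult_left_mono mult_left_mono_neg)
  moreover have "c * g t \<le> c * g s" if "mono_on {0..} g \<and> c \<le> 0 \<or> antimono_on {0..} g \<and> 0 \<le> c" "0 \<le> s" "s \<le> t" for s t
    using that monotone_onD[of "{0..}" "(\<le>)" "(\<le>)" g s t] monotone_onD[of "{0..}" "(\<le>)" "\<lambda>x y. y \<le> x" g s t]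
    by (auto intro: mult_left_mono mult_left_mono_neg)
  ultimately show "mono_on {0..} (\<lambda>t. ennreal (exp (c * f t))) \<or> antimono_on {0..} (\<lambda>t. ennreal (exp (c * f t)))"
    using g by (cases "0 \<le> c") (auto intro!: monotone_onI ennreal_leI simp: f)
qed

lemma nn_integral_exp_iid_estimator:
  fixes D :: "(real^'n) measure"
  assumes "prob_space D" and [measurable_cong]: "sets D = sets borel"
    and [measurable]: "f \<in> borel_measurable borel"
  shows "(\<integral>\<^sup>+ w. ennreal (exp (lam * iid_estimator f s z w)) \<partial>iid_ensemble D s)
       = (\<integral>\<^sup>+ w. ennreal (exp (lam / real s * f (w \<bullet> z))) \<partial>D) ^ s"
proof -
  interpret D: prob_space D by fact
  interpret product_sigma_finite "\<lambda>_::nat. D"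
    by (simp add: product_sigma_finite_def D.sigma_finite_measure_axioms)
  define E where "E v = ennreal (exp (lam / real s * f (v \<bullet> z)))" for v :: "real^'n"
  have "ennreal (exp (lam * iid_estimator f s z w)) = (\<Prod>i<s. E (w i))" for w
    by (simp add: E_def iid_estimator_def sum_distrib_left sum_divide_distrib exp_sum prod_ennreal)
  moreover have "(\<integral>\<^sup>+ w. (\<Prod>i<s. E (w i)) \<partial>iid_ensemble D s) = (\<Prod>i<s. integral\<^sup>N D E)"
    unfolding iid_ensemble_def by (rule product_nn_integral_prod) (auto simp: E_def)
  ultimately show ?thesis
    by (simp add: E_def[abs_def])
qed

lemma exp_ort_estimator:
  "ennreal (exp (lam * ort_estimator f e bs z x))
     = (\<Prod>p\<in>(SIGMA b:{..<length bs}. {..<bs ! b}).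
          ennreal (exp (lam / real (sum_list bs) * f (snd x p * (fst x (fst p) *v z) $ e (snd p)))))"
proof -
  have "lam * ort_estimator f e bs z x
      = (\<Sum>p\<in>(SIGMA b:{..<length bs}. {..<bs ! b}). lam / real (sum_list bs) * f (snd x p * (fst x (fst p) *v z) $ e (snd p)))"
    unfolding ort_estimator_def
    by (simp add: sum.Sigma sum_distrib_left case_prod_beta matrix_vector_mul_component)
  then show ?thesis
    by (simp add: exp_sum prod_ennreal)
qed

lemma nn_integral_prod_distr_norm:
  fixes D :: "'a::real_normed_vector measure"
  assumes "prob_space D" and [measurable_cong]: "sets D = sets borel"
    and "finite B" and [measurable]: "E \<in> borel_measurable borel"
  shows "(\<integral>\<^sup>+ l. (\<Prod>p\<in>B. E (l p * c p)) \<partial>PiM B (\<lambda>_. distr D borel norm))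
       = (\<Prod>p\<in>B. \<integral>\<^sup>+ w. E (norm w * c p) \<partial>D)"
proof -
  interpret L: prob_space "distr D borel norm"
    by (rule prob_space.prob_space_distr[OF assms(1)]) simp
  have "product_sigma_finite (\<lambda>_. distr D borel norm)"
    by (simp add: product_sigma_finite_def L.sigma_finite_measure_axioms)
  then have "(\<integral>\<^sup>+ l. (\<Prod>p\<in>B. (\<lambda>t. E (t * c p)) (l p)) \<partial>PiM B (\<lambda>_. distr D borel norm))
      = (\<Prod>p\<in>B. \<integral>\<^sup>+ t. E (t * c p) \<partial>distr D borel norm)"
    by (rule product_sigma_finite.product_nn_integral_prod) (simp_all add: \<open>finite B\<close>)
  then show ?thesis
    by (simp add: nn_integral_distr)
qed

lemma nn_integral_exp_ort_estimator:
  fixes D :: "(real^'n) measure" and H :: "(real^'n^'n) measure"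
  assumes "prob_space D" and [measurable_cong]: "sets D = sets borel"
    and "prob_space H" and [measurable_cong]: "sets H = sets borel"
    and [measurable]: "f \<in> borel_measurable borel"
  shows "(\<integral>\<^sup>+ x. ennreal (exp (lam * ort_estimator f e bs z x)) \<partial>ort_ensemble D H bs)
       = (\<Prod>b<length bs. \<integral>\<^sup>+ M. (\<Prod>j<bs ! b.
            \<integral>\<^sup>+ w. ennreal (exp (lam / real (sum_list bs) * f (norm w * (M *v z) $ e j))) \<partial>D) \<partial>H)"
proof -
  interpret D: prob_space D by fact
  interpret H: prob_space H by fact
  define A where "A = {..<length bs}"
  define B where "B = (SIGMA b:A. {..<bs ! b})"
  define L where "L = distr D borel (norm :: real^'n \<Rightarrow> real)"
  define E where "E t = ennreal (exp (lam / real (sum_list bs) * f t))" for t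
  define h where "h x = (\<Prod>p\<in>B. E (snd x p * (fst x (fst p) *v z) $ e (snd p)))"
    for x :: "(nat \<Rightarrow> real^'n^'n) \<times> (nat \<times> nat \<Rightarrow> real)"
  have E_measurable [measurable]: "E \<in> borel_measurable borel"
    unfolding E_def by measurable
  have finite: "finite A" "finite B"
    by (auto simp: A_def B_def)
  have [measurable_cong]: "sets L = sets borel"
    by (simp add: L_def)
  interpret LB: prob_space "PiM B (\<lambda>_. L)"
    unfolding L_def by (intro prob_space_PiM D.prob_space_distr) simp
  have h_measurable: "h \<in> borel_measurable (PiM A (\<lambda>_. H) \<Otimes>\<^sub>M PiM B (\<lambda>_. L))"
    unfolding h_def B_def by measurable auto
  have "(\<integral>\<^sup>+ x. ennreal (exp (lam * ort_estimator f e bs z x)) \<partial>ort_ensemble D H bs)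
      = integral\<^sup>N (PiM A (\<lambda>_. H) \<Otimes>\<^sub>M PiM B (\<lambda>_. L)) h"
    unfolding ort_ensemble_def exp_ort_estimator by (simp add: A_def B_def L_def h_def[abs_def] E_def)
  also have "\<dots> = (\<integral>\<^sup>+ Ms. \<integral>\<^sup>+ ls. h (Ms, ls) \<partial>PiM B (\<lambda>_. L) \<partial>PiM A (\<lambda>_. H))"
    by (rule LB.nn_integral_fst[OF h_measurable, symmetric])
  also have "\<dots> = (\<integral>\<^sup>+ Ms. (\<Prod>p\<in>B. \<integral>\<^sup>+ w. E (norm w * (Ms (fst p) *v z) $ e (snd p)) \<partial>D) \<partial>PiM A (\<lambda>_. H))"
    unfolding h_def L_def by (simp add: nn_integral_prod_distr_norm[OF assms(1,2) finite(2) E_measurable])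
  also have "\<dots> = (\<integral>\<^sup>+ Ms. (\<Prod>b\<in>A. \<Prod>j<bs ! b. \<integral>\<^sup>+ w. E (norm w * (Ms b *v z) $ e j) \<partial>D) \<partial>PiM A (\<lambda>_. H))"
    unfolding B_def by (simp add: prod.Sigma finite case_prod_beta)
  also have "\<dots> = (\<Prod>b\<in>A. \<integral>\<^sup>+ M. (\<Prod>j<bs ! b. \<integral>\<^sup>+ w. E (norm w * (M *v z) $ e j) \<partial>D) \<partial>H)"
    by (rule product_sigma_finite.product_nn_integral_prod)
      (simp_all add: product_sigma_finite_def H.sigma_finite_measure_axioms finite)
  finally show ?thesis
    by (simp add: A_def E_def)
qed

section \<open>Haar measure on the orthogonal group\<close>

locale haar_space =
  fixes H :: "(real^'n::finite^'n) measure"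
  assumes haar_orthogonal: "haar_orthogonal H"
begin

lemma prob_space_H: "prob_space H" and sets_H [measurable_cong]: "sets H = sets borel"
  and AE_orthogonal_matrix: "AE M in H. orthogonal_matrix M"
  and distr_left_mult: "orthogonal_matrix Q \<Longrightarrow> distr H borel (\<lambda>M. Q ** M) = H"
  using haar_orthogonal unfolding haar_orthogonal_def by auto

sublocale prob_space H by (rule prob_space_H)

lemma space_H [simp]: "space H = UNIV"
  using sets_eq_imp_space_eq[OF sets_H] by simp

lemma emeasure_H_UNIV [simp]: "emeasure H UNIV = 1"
  using emeasure_space_1 by simp

lemma pair_sigma_finite_H: "pair_sigma_finite H H"
  by (simp add: pair_sigma_finite.intro sigma_finite_measure_axioms)

lemma nn_integral_left_mult:
  assumes "orthogonal_matrix Q" and [measurable]: "F \<in> borel_measurable borel"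
  shows "(\<integral>\<^sup>+ M. F (Q ** M) \<partial>H) = integral\<^sup>N H F"
proof -
  have "integral\<^sup>N H F = integral\<^sup>N (distr H borel (\<lambda>M. Q ** M)) F"
    using distr_left_mult[OF assms(1)] by simp
  also have "\<dots> = (\<integral>\<^sup>+ M. F (Q ** M) \<partial>H)"
    by (rule nn_integral_distr) measurable
  finally show ?thesis ..
qed

text \<open>Right invariance is not part of the definition; it follows from left invariance via
  \<open>\<integral>F = \<integral>\<integral>F(A\<^sup>T B) dB dA = \<integral>\<integral>F(A\<^sup>T B) dA dB = \<integral>F(A\<^sup>T)\<close>, since \<open>A\<^sup>T B = (B\<^sup>T A)\<^sup>T\<close>.\<close>

lemma nn_integral_transpose:
  assumes [measurable]: "F \<in> borel_measurable borel"
  shows "(\<integral>\<^sup>+ M. F (transpose M) \<partial>H) = integral\<^sup>N H F"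
proof -
  have [measurable]: "(\<lambda>(A, B). F (transpose A ** B)) \<in> borel_measurable (H \<Otimes>\<^sub>M H)"
    by measurable
  have "integral\<^sup>N H F = (\<integral>\<^sup>+ A. integral\<^sup>N H F \<partial>H)"
    by simp
  also have "\<dots> = (\<integral>\<^sup>+ A. \<integral>\<^sup>+ B. F (transpose A ** B) \<partial>H \<partial>H)"
    by (intro nn_integral_cong_AE, use AE_orthogonal_matrix in eventually_elim)
      (simp add: nn_integral_left_mult)
  also have "\<dots> = (\<integral>\<^sup>+ B. \<integral>\<^sup>+ A. F (transpose A ** B) \<partial>H \<partial>H)"
    by (rule pair_sigma_finite.Fubini'[OF pair_sigma_finite_H]) measurable
  also have "\<dots> = (\<integral>\<^sup>+ B. \<integral>\<^sup>+ A. F (transpose A) \<partial>H \<partial>H)"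
  proof (intro nn_integral_cong_AE, use AE_orthogonal_matrix in eventually_elim)
    fix B :: "real^'n^'n" assume "orthogonal_matrix B"
    then show "(\<integral>\<^sup>+ A. F (transpose A ** B) \<partial>H) = (\<integral>\<^sup>+ A. F (transpose A) \<partial>H)"
      using nn_integral_left_mult[of "transpose B" "\<lambda>A. F (transpose A)"]
      by (simp add: matrix_transpose_mul)
  qed
  finally show ?thesis by simp
qed

lemma nn_integral_right_mult:
  assumes "orthogonal_matrix Q" and [measurable]: "F \<in> borel_measurable borel"
  shows "(\<integral>\<^sup>+ M. F (M ** Q) \<partial>H) = integral\<^sup>N H F"
proof -
  have "(\<integral>\<^sup>+ M. F (M ** Q) \<partial>H) = (\<integral>\<^sup>+ M. F (transpose (transpose Q ** M)) \<partial>H)"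
    using nn_integral_transpose[of "\<lambda>M. F (transpose M ** Q)"] by (simp add: matrix_transpose_mul)
  also have "\<dots> = (\<integral>\<^sup>+ M. F (transpose M) \<partial>H)"
    using nn_integral_left_mult[of "transpose Q" "\<lambda>A. F (transpose A)"] assms by simp
  finally show ?thesis using nn_integral_transpose by simp
qed

lemma nn_integral_axis_stabilizer_eq:
  assumes [measurable]: "F \<in> borel_measurable borel"
    and "u $ m = v $ m" and "norm u = norm v"
  shows "(\<integral>\<^sup>+ N. F (axis_stabilizer m N u) \<partial>H) = (\<integral>\<^sup>+ N. F (axis_stabilizer m N v) \<partial>H)"
proof -
  define Q where "Q = matrix (householder (v - u))"
  have Q: "orthogonal_matrix Q" "\<And>x. Q *v x = householder (v - u) x"
    unfolding Q_def using orthogonal_transformation_matrixD[OF orthogonal_transformation_householder]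
    by auto
  have "Q *v axis m 1 = axis m 1"
    using assms(2) by (simp add: Q(2) householder_orthogonal inner_diff_left inner_axis)
  moreover have "Q *v v = u"
    using assms(3) by (simp add: Q(2) householder_swap)
  ultimately have "(\<integral>\<^sup>+ N. F (axis_stabilizer m (N ** Q) v) \<partial>H) = (\<integral>\<^sup>+ N. F (axis_stabilizer m N u) \<partial>H)"
    by (simp add: axis_stabilizer_matrix_mult)
  then show ?thesis
    using nn_integral_right_mult[OF Q(1), of "\<lambda>N. F (axis_stabilizer m N v)"] by simp
qed

lemma nn_integral_average_axis_stabilizer:
  assumes [measurable]: "F \<in> borel_measurable borel"
  shows "(\<integral>\<^sup>+ M. F (M *v z) \<partial>H) = (\<integral>\<^sup>+ M. \<integral>\<^sup>+ N. F (axis_stabilizer m N (M *v z)) \<partial>H \<partial>H)"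
proof -
  have "(\<integral>\<^sup>+ M. \<integral>\<^sup>+ N. F (axis_stabilizer m N (M *v z)) \<partial>H \<partial>H)
      = (\<integral>\<^sup>+ N. \<integral>\<^sup>+ M. F (axis_stabilizer m N (M *v z)) \<partial>H \<partial>H)"
    by (rule pair_sigma_finite.Fubini'[OF pair_sigma_finite_H]) measurable
  also have "\<dots> = (\<integral>\<^sup>+ N. \<integral>\<^sup>+ M. F (M *v z) \<partial>H \<partial>H)"
  proof (intro nn_integral_cong_AE, use AE_orthogonal_matrix in eventually_elim)
    fix N :: "real^'n^'n" assume "orthogonal_matrix N"
    note S = orthogonal_transformation_matrixD[OF orthogonal_transformation_axis_stabilizer[OF this]]
    have "(\<integral>\<^sup>+ M. F (axis_stabilizer m N (M *v z)) \<partial>H)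
        = (\<integral>\<^sup>+ M. F ((matrix (axis_stabilizer m N) ** M) *v z) \<partial>H)"
      by (simp add: matrix_vector_mul_assoc[symmetric] S(2))
    also have "\<dots> = (\<integral>\<^sup>+ M. F (M *v z) \<partial>H)"
      by (rule nn_integral_left_mult[OF S(1)]) measurable
    finally show "(\<integral>\<^sup>+ M. F (axis_stabilizer m N (M *v z)) \<partial>H) = (\<integral>\<^sup>+ M. F (M *v z) \<partial>H)" .
  qed
  finally show ?thesis by simp
qed

text \<open>Conditioning on the \<open>m\<close>-th coordinate of \<open>M z\<close>: given it, the vector is spread
  uniformly by the stabiliser of \<open>e\<^sub>m\<close>.\<close>

lemma nn_integral_condition_coordinate:
  assumes [measurable]: "a \<in> borel_measurable borel" "\<Psi> \<in> borel_measurable borel"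
  shows "(\<integral>\<^sup>+ M. a ((M *v z) $ m) * \<Psi> (M *v z) \<partial>H)
       = (\<integral>\<^sup>+ M. a ((M *v z) $ m) * (\<integral>\<^sup>+ N. \<Psi> (axis_stabilizer m N (M *v z)) \<partial>H) \<partial>H)"
proof -
  have "(\<integral>\<^sup>+ M. a ((M *v z) $ m) * \<Psi> (M *v z) \<partial>H)
      = (\<integral>\<^sup>+ M. \<integral>\<^sup>+ N. a (axis_stabilizer m N (M *v z) $ m) * \<Psi> (axis_stabilizer m N (M *v z)) \<partial>H \<partial>H)"
    by (rule nn_integral_average_axis_stabilizer[where F = "\<lambda>x. a (x $ m) * \<Psi> x"]) measurable
  also have "\<dots> = (\<integral>\<^sup>+ M. \<integral>\<^sup>+ N. a ((M *v z) $ m) * \<Psi> (axis_stabilizer m N (M *v z)) \<partial>H \<partial>H)"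
    using AE_orthogonal_matrix
    by (intro nn_integral_cong nn_integral_cong_AE) (auto elim!: eventually_mono simp: axis_stabilizer_nth)
  finally show ?thesis by (simp add: nn_integral_cmult)
qed

lemma AE_norm_matrix_vector_mult: "AE M in H. norm (M *v z) = norm z"
  using AE_orthogonal_matrix
  by eventually_elim (simp add: orthogonal_transformation_norm orthogonal_transformation_matrix_vector_mult)

lemma nn_integral_axis_stabilizer_radial:
  fixes x :: "real^'n"
  assumes [measurable]: "\<Psi> \<in> borel_measurable borel"
    and shift: "\<And>x t. \<Psi> (x + t *\<^sub>R axis m 1) = \<Psi> x" and "k \<noteq> m" and "norm x = r"
  shows "(\<integral>\<^sup>+ N. \<Psi> (axis_stabilizer m N x) \<partial>H)
       = (\<integral>\<^sup>+ N. \<Psi> (sqrt (max 0 (r\<^sup>2 - (x $ m)\<^sup>2)) *\<^sub>R axis_stabilizer m N (axis k 1)) \<partial>H)"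
proof -
  define \<rho> where "\<rho> = sqrt (max 0 (r\<^sup>2 - (x $ m)\<^sup>2))"
  define v :: "real^'n" where "v = x $ m *\<^sub>R axis m 1 + \<rho> *\<^sub>R axis k 1"
  have "(x $ m)\<^sup>2 \<le> r\<^sup>2"
    using component_le_norm_cart[of x m] by (simp add: abs_le_square_iff[symmetric] flip: \<open>norm x = r\<close>)
  then have "\<rho>\<^sup>2 = r\<^sup>2 - (x $ m)\<^sup>2"
    by (simp add: \<rho>_def)
  then have "v \<bullet> v = r\<^sup>2"
    using \<open>k \<noteq> m\<close> by (simp add: v_def inner_add_left inner_add_right inner_axis_axis power2_eq_square)
  then have "norm v = norm x"
    by (simp add: norm_eq_sqrt_inner flip: \<open>norm x = r\<close>)
  moreover have "v $ m = x $ m"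
    using \<open>k \<noteq> m\<close> by (simp add: v_def axis_def)
  ultimately have "(\<integral>\<^sup>+ N. \<Psi> (axis_stabilizer m N x) \<partial>H) = (\<integral>\<^sup>+ N. \<Psi> (axis_stabilizer m N v) \<partial>H)"
    by (intro nn_integral_axis_stabilizer_eq) auto
  also have "\<dots> = (\<integral>\<^sup>+ N. \<Psi> (\<rho> *\<^sub>R axis_stabilizer m N (axis k 1)) \<partial>H)"
  proof (intro nn_integral_cong_AE, use AE_orthogonal_matrix in eventually_elim)
    fix N :: "real^'n^'n" assume N: "orthogonal_matrix N"
    then have "linear (axis_stabilizer m N)"
      by (simp add: orthogonal_transformation_axis_stabilizer orthogonal_transformation_linear)
    then have "axis_stabilizer m N v = \<rho> *\<^sub>R axis_stabilizer m N (axis k 1) + x $ m *\<^sub>R axis m 1"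
      by (simp add: v_def linear_add linear_scale axis_stabilizer_axis[OF N])
    then show "\<Psi> (axis_stabilizer m N v) = \<Psi> (\<rho> *\<^sub>R axis_stabilizer m N (axis k 1))"
      by (simp add: shift)
  qed
  finally show ?thesis by (simp add: \<rho>_def)
qed

lemma nn_integral_coordinate_prod_le:
  fixes \<phi> :: "real \<Rightarrow> ennreal"
  assumes [measurable]: "\<phi> \<in> borel_measurable borel"
    and \<phi>_mono: "mono_on {0..} \<phi> \<or> antimono_on {0..} \<phi>" and "finite S" "m \<notin> S"
  shows "(\<integral>\<^sup>+ M. \<phi> \<bar>(M *v z) $ m\<bar> * (\<Prod>k\<in>S. \<phi> \<bar>(M *v z) $ k\<bar>) \<partial>H)
       \<le> (\<integral>\<^sup>+ M. \<phi> \<bar>(M *v z) $ m\<bar> \<partial>H) * (\<integral>\<^sup>+ M. (\<Prod>k\<in>S. \<phi> \<bar>(M *v z) $ k\<bar>) \<partial>H)"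
proof (cases "S = {}")
  case False
  then obtain k where "k \<in> S" by auto
  with \<open>m \<notin> S\<close> have "k \<noteq> m" by auto
  define \<Psi> where "\<Psi> x = (\<Prod>j\<in>S. \<phi> \<bar>x $ j\<bar>)" for x :: "real^'n"
  define \<beta> where "\<beta> t = (\<integral>\<^sup>+ N. (\<Prod>j\<in>S. \<phi> \<bar>sqrt (max 0 ((norm z)\<^sup>2 - t\<^sup>2)) * axis_stabilizer m N (axis k 1) $ j\<bar>) \<partial>H)"
    for t
  have \<Psi>_measurable [measurable]: "\<Psi> \<in> borel_measurable borel"
    unfolding \<Psi>_def by measurable
  have [measurable]: "\<beta> \<in> borel_measurable borel"
    unfolding \<beta>_def by measurable
  have \<Psi>_shift: "\<Psi> (x + t *\<^sub>R axis m 1) = \<Psi> x" for x t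
    unfolding \<Psi>_def using \<open>m \<notin> S\<close> by (intro prod.cong) (auto simp: axis_def)
  have conditional: "AE M in H. (\<integral>\<^sup>+ N. \<Psi> (axis_stabilizer m N (M *v z)) \<partial>H) = \<beta> \<bar>(M *v z) $ m\<bar>"
    using AE_norm_matrix_vector_mult[of z]
  proof eventually_elim
    case (elim M)
    show ?case
      using nn_integral_axis_stabilizer_radial[OF \<Psi>_measurable \<Psi>_shift \<open>k \<noteq> m\<close> elim]
      by (simp add: \<beta>_def \<Psi>_def)
  qed
  have opposite: "mono_on {0..} \<phi> \<and> antimono_on {0..} \<beta> \<or> antimono_on {0..} \<phi> \<and> mono_on {0..} \<beta>"
    unfolding \<beta>_def[abs_def] by (rule nn_integral_prod_sqrt_opposite_mono[OF \<phi>_mono])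
  have "(\<integral>\<^sup>+ M. \<phi> \<bar>(M *v z) $ m\<bar> * \<Psi> (M *v z) \<partial>H) = (\<integral>\<^sup>+ M. \<phi> \<bar>(M *v z) $ m\<bar> * \<beta> \<bar>(M *v z) $ m\<bar> \<partial>H)"
    using nn_integral_condition_coordinate[of "\<lambda>t. \<phi> \<bar>t\<bar>" \<Psi> z m] conditional
    by (simp add: nn_integral_cong_AE eventually_mono)
  also have "\<dots> \<le> (\<integral>\<^sup>+ M. \<phi> \<bar>(M *v z) $ m\<bar> \<partial>H) * (\<integral>\<^sup>+ M. \<beta> \<bar>(M *v z) $ m\<bar> \<partial>H)"
    using rearrangement_mono_on_antimono_on[OF opposite]
    by (intro nn_integral_mult_le_oppositely_ordered) auto
  also have "(\<integral>\<^sup>+ M. \<beta> \<bar>(M *v z) $ m\<bar> \<partial>H) = (\<integral>\<^sup>+ M. \<Psi> (M *v z) \<partial>H)"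
    using nn_integral_condition_coordinate[of "\<lambda>_. 1" \<Psi> z m] conditional
    by (simp add: nn_integral_cong_AE eventually_mono)
  finally show ?thesis by (simp add: \<Psi>_def)
qed simp

lemma nn_integral_prod_coordinates_le:
  fixes \<phi> :: "real \<Rightarrow> ennreal"
  assumes [measurable]: "\<phi> \<in> borel_measurable borel"
    and "mono_on {0..} \<phi> \<or> antimono_on {0..} \<phi>" and "finite S"
  shows "(\<integral>\<^sup>+ M. (\<Prod>k\<in>S. \<phi> \<bar>(M *v z) $ k\<bar>) \<partial>H) \<le> (\<Prod>k\<in>S. \<integral>\<^sup>+ M. \<phi> \<bar>(M *v z) $ k\<bar> \<partial>H)"
  using \<open>finite S\<close>
proof (induction S rule: finite_induct)
  case (insert m S)
  have "(\<integral>\<^sup>+ M. (\<Prod>k\<in>insert m S. \<phi> \<bar>(M *v z) $ k\<bar>) \<partial>H)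
      = (\<integral>\<^sup>+ M. \<phi> \<bar>(M *v z) $ m\<bar> * (\<Prod>k\<in>S. \<phi> \<bar>(M *v z) $ k\<bar>) \<partial>H)"
    using insert by simp
  also have "\<dots> \<le> (\<integral>\<^sup>+ M. \<phi> \<bar>(M *v z) $ m\<bar> \<partial>H) * (\<integral>\<^sup>+ M. (\<Prod>k\<in>S. \<phi> \<bar>(M *v z) $ k\<bar>) \<partial>H)"
    using assms insert by (intro nn_integral_coordinate_prod_le) auto
  also have "\<dots> \<le> (\<integral>\<^sup>+ M. \<phi> \<bar>(M *v z) $ m\<bar> \<partial>H) * (\<Prod>k\<in>S. \<integral>\<^sup>+ M. \<phi> \<bar>(M *v z) $ k\<bar> \<partial>H)"
    by (intro mult_left_mono insert.IH) simp
  finally show ?case using insert by simp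
qed simp

lemma nn_integral_inner_matrix_vector_mult:
  assumes [measurable]: "F \<in> borel_measurable borel"
  shows "(\<integral>\<^sup>+ M. F (w \<bullet> (M *v z)) \<partial>H) = (\<integral>\<^sup>+ M. F (norm w * (M *v z) $ k) \<partial>H)"
proof -
  define a :: "real^'n" where "a = norm w *\<^sub>R axis k 1"
  define Q where "Q = matrix (householder (a - w))"
  have Q: "orthogonal_matrix Q" "\<And>x. Q *v x = householder (a - w) x"
    unfolding Q_def using orthogonal_transformation_matrixD[OF orthogonal_transformation_householder]
    by auto
  have "Q *v a = w"
    by (simp add: Q(2) householder_swap a_def)
  have "w \<bullet> (M *v z) = a \<bullet> ((transpose Q ** M) *v z)" for M
  proof -
    have "w \<bullet> (M *v z) = (transpose (transpose Q) *v a) \<bullet> (M *v z)"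
      by (simp only: transpose_transpose \<open>Q *v a = w\<close>)
    also have "\<dots> = a \<bullet> ((transpose Q ** M) *v z)"
      by (simp only: inner_transpose_matrix_vector_mult matrix_vector_mul_assoc)
    finally show ?thesis .
  qed
  moreover have "(\<integral>\<^sup>+ M. F (a \<bullet> ((transpose Q ** M) *v z)) \<partial>H) = (\<integral>\<^sup>+ M. F (a \<bullet> (M *v z)) \<partial>H)"
    by (rule nn_integral_left_mult[OF orthogonal_matrix_transpose[THEN iffD2, OF Q(1)]]) measurable
  ultimately have "(\<integral>\<^sup>+ M. F (w \<bullet> (M *v z)) \<partial>H) = (\<integral>\<^sup>+ M. F (a \<bullet> (M *v z)) \<partial>H)"
    by simp
  then show ?thesis by (simp add: a_def inner_axis')
qed

end

section \<open>Isotropic distributions\<close>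

locale isotropic_haar_space = haar_space H for H :: "(real^'n::finite^'n) measure" +
  fixes D :: "(real^'n) measure"
  assumes prob_space_D: "prob_space D" and sets_D [measurable_cong]: "sets D = sets borel"
    and isotropic_D: "isotropic D"
begin

sublocale D: prob_space D by (rule prob_space_D)

lemma nn_integral_isotropic:
  assumes "orthogonal_matrix Q" and [measurable]: "F \<in> borel_measurable borel"
  shows "(\<integral>\<^sup>+ w. F (Q *v w) \<partial>D) = integral\<^sup>N D F"
proof -
  have "integral\<^sup>N D F = integral\<^sup>N (distr D borel (\<lambda>w. Q *v w)) F"
    using isotropic_D assms(1) unfolding isotropic_def by simp
  also have "\<dots> = (\<integral>\<^sup>+ w. F (Q *v w) \<partial>D)"
    by (rule nn_integral_distr) measurable
  finally show ?thesis ..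
qed

lemma nn_integral_norm_times_coordinate:
  assumes [measurable]: "F \<in> borel_measurable borel"
  shows "(\<integral>\<^sup>+ M. \<integral>\<^sup>+ w. F (norm w * (M *v z) $ k) \<partial>D \<partial>H) = (\<integral>\<^sup>+ w. F (w \<bullet> z) \<partial>D)"
proof -
  have pair: "pair_sigma_finite H D"
    by (simp add: pair_sigma_finite.intro sigma_finite_measure_axioms D.sigma_finite_measure_axioms)
  have [measurable]: "(\<lambda>(M, w). F (norm w * (M *v z) $ k)) \<in> borel_measurable (H \<Otimes>\<^sub>M D)"
    by measurable
  have "(\<integral>\<^sup>+ w. F ((transpose M *v w) \<bullet> z) \<partial>D) = (\<integral>\<^sup>+ w. F (w \<bullet> z) \<partial>D)"
    if "orthogonal_matrix M" for M
    by (rule nn_integral_isotropic) (use that in simp, measurable)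
  then have "(\<integral>\<^sup>+ M. \<integral>\<^sup>+ w. F ((transpose M *v w) \<bullet> z) \<partial>D \<partial>H) = (\<integral>\<^sup>+ M. \<integral>\<^sup>+ w. F (w \<bullet> z) \<partial>D \<partial>H)"
    using AE_orthogonal_matrix by (intro nn_integral_cong_AE) (auto elim: eventually_mono)
  then have "(\<integral>\<^sup>+ w. F (w \<bullet> z) \<partial>D) = (\<integral>\<^sup>+ M. \<integral>\<^sup>+ w. F ((transpose M *v w) \<bullet> z) \<partial>D \<partial>H)"
    by simp
  also have "\<dots> = (\<integral>\<^sup>+ w. \<integral>\<^sup>+ M. F (w \<bullet> (M *v z)) \<partial>H \<partial>D)"
    by (subst pair_sigma_finite.Fubini'[OF pair]) (measurable, simp add: dot_lmul_matrix)
  also have "\<dots> = (\<integral>\<^sup>+ w. \<integral>\<^sup>+ M. F (norm w * (M *v z) $ k) \<partial>H \<partial>D)"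
    by (rule nn_integral_cong) (rule nn_integral_inner_matrix_vector_mult[OF assms])
  also have "\<dots> = (\<integral>\<^sup>+ M. \<integral>\<^sup>+ w. F (norm w * (M *v z) $ k) \<partial>D \<partial>H)"
    using pair_sigma_finite.Fubini'[OF pair, of "\<lambda>M w. F (norm w * (M *v z) $ k)"] by simp
  finally show ?thesis ..
qed

lemma nn_integral_orthogonal_block_le:
  fixes E :: "real \<Rightarrow> ennreal"
  assumes [measurable]: "E \<in> borel_measurable borel" and E_abs: "\<And>t. E \<bar>t\<bar> = E t"
    and E_mono: "mono_on {0..} E \<or> antimono_on {0..} E" and "finite J" "inj_on e J"
  shows "(\<integral>\<^sup>+ M. (\<Prod>j\<in>J. \<integral>\<^sup>+ w. E (norm w * (M *v z) $ e j) \<partial>D) \<partial>H)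
       \<le> (\<integral>\<^sup>+ w. E (w \<bullet> z) \<partial>D) ^ card J"
proof -
  define \<phi> where "\<phi> c = (\<integral>\<^sup>+ w. E (norm w * c) \<partial>D)" for c
  have [measurable]: "\<phi> \<in> borel_measurable borel"
    unfolding \<phi>_def by measurable
  have \<phi>_abs: "\<phi> \<bar>c\<bar> = \<phi> c" for c
    unfolding \<phi>_def by (metis E_abs abs_mult abs_norm_cancel)
  have \<phi>_mono: "mono_on {0..} \<phi> \<or> antimono_on {0..} \<phi>"
    unfolding \<phi>_def[abs_def] by (rule nn_integral_scaled_mono_or_antimono[OF E_mono norm_ge_zero])
  have "(\<integral>\<^sup>+ M. (\<Prod>j\<in>J. \<phi> ((M *v z) $ e j)) \<partial>H) = (\<integral>\<^sup>+ M. (\<Prod>k\<in>e ` J. \<phi> \<bar>(M *v z) $ k\<bar>) \<partial>H)"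
    by (simp add: prod.reindex[OF \<open>inj_on e J\<close>] \<phi>_abs)
  also have "\<dots> \<le> (\<Prod>k\<in>e ` J. \<integral>\<^sup>+ M. \<phi> \<bar>(M *v z) $ k\<bar> \<partial>H)"
    using \<phi>_mono \<open>finite J\<close> by (intro nn_integral_prod_coordinates_le) auto
  also have "\<dots> = (\<Prod>k\<in>e ` J. \<integral>\<^sup>+ M. \<phi> ((M *v z) $ k) \<partial>H)"
    by (simp only: \<phi>_abs)
  also have "\<dots> = (\<integral>\<^sup>+ w. E (w \<bullet> z) \<partial>D) ^ card J"
    unfolding \<phi>_def nn_integral_norm_times_coordinate[OF assms(1)]
    by (simp add: card_image[OF \<open>inj_on e J\<close>])
  finally show ?thesis by (simp add: \<phi>_def)
qed

end

theorem corollary1: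
  fixes D :: "(real^'n) measure" and H :: "(real^'n^'n) measure"
    and e :: "nat \<Rightarrow> 'n" and z :: "real^'n" and f g :: "real \<Rightarrow> real"
    and s :: nat and bs :: "nat list" and lam :: real
  assumes "prob_space D" and "sets D = sets borel" and "isotropic D"
    and "measure D {0} = 0"
    and "haar_orthogonal H"
    and "bij_betw e {..<CARD('n)} UNIV"
    and "\<forall>u. f u = g \<bar>u\<bar>"
    and "mono_on {0..} g \<or> antimono_on {0..} g"
    and "\<forall>m\<in>set bs. 0 < m \<and> m \<le> CARD('n)"
    and "sum_list bs = s"
    and "(\<integral>\<^sup>+ w. ennreal (exp (lam * f (w \<bullet> z) / real s)) \<partial>D) < \<infinity>"
  shows "(\<integral>\<^sup>+ x. ennreal (exp (lam * ort_estimator f e bs z x)) \<partial>ort_ensemble D H bs)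
         \<le> (\<integral>\<^sup>+ w. ennreal (exp (lam * iid_estimator f s z w)) \<partial>iid_ensemble D s)"
proof -
  \<comment> \<open>Both sides are \<open>ennreal\<close> integrals.\<close>
  interpret isotropic_haar_space H D
    by (simp add: isotropic_haar_space_def haar_space_def isotropic_haar_space_axioms_def assms)
  have F1: "class_F1 f"
    using assms(7,8) unfolding class_F1_def by blast
  have inj: "inj_on e {..<bs ! b}" if "b < length bs" for b
    using assms(9) nth_mem[OF that]
    by (intro inj_on_subset[OF bij_betw_imp_inj_on[OF assms(6)]]) auto
  have "(\<integral>\<^sup>+ x. ennreal (exp (lam * ort_estimator f e bs z x)) \<partial>ort_ensemble D H bs)
      = (\<Prod>b<length bs. \<integral>\<^sup>+ M. (\<Prod>j<bs ! b.
          \<integral>\<^sup>+ w. ennreal (exp (lam / real s * f (norm w * (M *v z) $ e j))) \<partial>D) \<partial>H)"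
    using nn_integral_exp_ort_estimator[OF assms(1,2) prob_space_H sets_H borel_measurable_class_F1[OF F1]]
    by (simp add: assms(10))
  also have "\<dots> \<le> (\<Prod>b<length bs. (\<integral>\<^sup>+ w. ennreal (exp (lam / real s * f (w \<bullet> z))) \<partial>D) ^ (bs ! b))"
    by (rule prod_mono_ennreal)
      (use nn_integral_orthogonal_block_le[OF class_F1_exp_mult[OF F1, where c = "lam / real s"] finite_lessThan inj] in simp)
  also have "\<dots> = (\<integral>\<^sup>+ w. ennreal (exp (lam / real s * f (w \<bullet> z))) \<partial>D) ^ s"
    by (simp add: power_sum[symmetric] sum_list_sum_nth atLeast0LessThan flip: assms(10))
  also have "\<dots> = (\<integral>\<^sup>+ w. ennreal (exp (lam * iid_estimator f s z w)) \<partial>iid_ensemble D s)"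
    using nn_integral_exp_iid_estimator[OF assms(1,2) borel_measurable_class_F1[OF F1]] by simp
  finally show ?thesis .
qed

end
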